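(* Let $b\in L^1(\mathbb{R}_+)$, $\lambda>0$, and let $\varphi$ be the solution of $\varphi''-\lambda^2\tilde m^2(t)\varphi=0$ on $[0,\infty)$ described in the context. Set $\nu(t)=-\varphi'(t)/\varphi(t)$. Then there exists $\delta_2\in(0,1)$ such that $\lambda\delta_2\le\nu(t)\le\lambda/\delta_2$ for all $t\ge0$.
   Context: $m(t)=e^{\int_0^tb(\tau)d\tau}$, $h(t)=\int_0^t\frac{d\tau}{m(\tau)}$, $\eta=h^{-1}$ (inverse function), $\tilde m(t)=m(\eta(t))$, $k=\exp(\int_0^\infty b(\tau)d\tau)$. $\varphi$ is the solution of $\varphi''=\lambda^2\tilde m^2\varphi$ for which there exists $t_0\ge0$ such that $(\varphi(t),\varphi'(t))=\big(1+o(1),\,-\lambda k+o(1)\big)e^{-\lambda\int_{t_0}^t\tilde m(\tau)d\tau}$ as $t\to\infty$. *)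

theory Defs
  imports "HOL-Analysis.Analysis"
begin

definition m_fun :: "(real \<Rightarrow> real) \<Rightarrow> real \<Rightarrow> real" where
  "m_fun b t = exp (integral {0..t} b)"

definition h_fun :: "(real \<Rightarrow> real) \<Rightarrow> real \<Rightarrow> real" where
  "h_fun b t = integral {0..t} (\<lambda>\<tau>. 1 / m_fun b \<tau>)"

definition eta_fun :: "(real \<Rightarrow> real) \<Rightarrow> real \<Rightarrow> real" where
  "eta_fun b = inv_into {0..} (h_fun b)"

definition mt_fun :: "(real \<Rightarrow> real) \<Rightarrow> real \<Rightarrow> real" where
  "mt_fun b t = m_fun b (eta_fun b t)"

definition k_const :: "(real \<Rightarrow> real) \<Rightarrow> real" where
  "k_const b = exp (integral {0..} b)"

end

theory Submission
  imports Defs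
begin

text \<open>
  Only two features of the equation matter: the coefficient \<open>\<lambda>\<^sup>2 m\<^sup>2\<close> is nonnegative and the
  limit \<open>\<lambda> k\<close> of \<open>\<nu>\<close> is positive (\<open>k\<close> is an exponential). The asymptotics make \<open>\<phi>\<close> positive and decreasing for large \<open>t\<close>. Going
  backwards, \<open>\<phi>\<close> stays positive: while \<open>\<phi> > 0\<close> the function \<open>\<phi>'\<close> is increasing, hence
  stays negative, so \<open>\<phi>\<close> grows as \<open>t\<close> decreases and cannot reach zero. Thus \<open>\<nu>\<close> is
  continuous and positive on \<open>[0,\<infinity>)\<close> with a positive limit, hence bounded above and away
  from zero.
\<close>

lemma deriv_nonneg_imp_le_atLeast:
  fixes f f' :: "real \<Rightarrow> real"
  assumes deriv: "\<And>t. t \<ge> c \<Longrightarrow> (f has_real_derivative f' t) (at t within {c..})"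
    and "c \<le> x" "x \<le> y"
    and nonneg: "\<And>t. x < t \<Longrightarrow> t < y \<Longrightarrow> f' t \<ge> 0"
  shows "f x \<le> f y"
proof (rule DERIV_nonneg_imp_increasing_open[OF \<open>x \<le> y\<close>])
  fix t assume t: "x < t" "t < y"
  have "at t within {c..} = at t"
    using t \<open>c \<le> x\<close> by (intro at_within_interior) simp
  then have "(f has_real_derivative f' t) (at t)"
    using deriv[of t] t \<open>c \<le> x\<close> by simp
  then show "\<exists>d. (f has_real_derivative d) (at t) \<and> 0 \<le> d"
    using nonneg t by blast
next
  have "continuous_on {c..} f"
    by (rule DERIV_continuous_on) (use deriv in auto)
  then show "continuous_on {x..y} f"
    by (rule continuous_on_subset) (use \<open>c \<le> x\<close> in auto)
qed

lemma solution_pos_and_deriv_neg_before: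
  fixes phi dphi q :: "real \<Rightarrow> real"
  assumes phi_deriv: "\<And>t. t \<ge> c \<Longrightarrow> (phi has_real_derivative dphi t) (at t within {c..})"
    and dphi_deriv: "\<And>t. t \<ge> c \<Longrightarrow> (dphi has_real_derivative q t * phi t) (at t within {c..})"
    and q_nonneg: "\<And>t. t \<ge> c \<Longrightarrow> q t \<ge> 0"
    and s_range: "c \<le> s" "s \<le> T" and at_T: "phi T > 0" "dphi T < 0"
  shows "phi s > 0 \<and> dphi s < 0"
proof -
  have dphi_neg: "dphi x < 0"
    if "c \<le> x" "x \<le> T" and pos: "\<And>y. x < y \<Longrightarrow> y < T \<Longrightarrow> phi y > 0" for x
  proof -
    have "dphi x \<le> dphi T"
      using that by (intro deriv_nonneg_imp_le_atLeast[OF dphi_deriv])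
        (auto intro!: mult_nonneg_nonneg q_nonneg less_imp_le[OF pos])
    with at_T show ?thesis by simp
  qed
  have phi_pos: "phi x > 0" if "c \<le> x" "x \<le> T" for x
  proof (rule ccontr)
    assume "\<not> phi x > 0"
    define Z where "Z = {c..T} \<inter> phi -` {..0}"
    have "continuous_on {c..T} phi"
      using DERIV_continuous_on[of "{c..}" phi dphi] phi_deriv
      by (auto intro: continuous_on_subset)
    then have "closed Z"
      unfolding Z_def by (rule continuous_closed_preimage) auto
    moreover have "x \<in> Z" "bdd_above Z"
      unfolding Z_def using \<open>\<not> phi x > 0\<close> that by (auto intro: bdd_aboveI[of _ T])
    ultimately have "Sup Z \<in> Z" and Sup_upper: "\<And>z. z \<in> Z \<Longrightarrow> z \<le> Sup Z"
      using closed_contains_Sup cSup_upper by blast+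
    then have Sup_Z: "c \<le> Sup Z" "Sup Z \<le> T" "phi (Sup Z) \<le> 0"
      unfolding Z_def by auto
    have pos_after: "phi y > 0" if "Sup Z < y" "y \<le> T" for y
      using that Sup_Z Sup_upper[of y] unfolding Z_def by force
    \<comment> \<open>on \<open>[Sup Z, T]\<close> the function \<open>\<phi>\<close> is decreasing, yet it goes from \<open>\<le> 0\<close> to \<open>> 0\<close>\<close>
    have "- phi (Sup Z) \<le> - phi T"
    proof (rule deriv_nonneg_imp_le_atLeast[where f = "\<lambda>t. - phi t" and f' = "\<lambda>t. - dphi t"])
      show "((\<lambda>t. - phi t) has_real_derivative - dphi t) (at t within {c..})" if "c \<le> t" for t
        using phi_deriv[OF that] by (rule DERIV_minus)
      show "- dphi t \<ge> 0" if "Sup Z < t" "t < T" for t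
        using dphi_neg[of t] that Sup_Z pos_after by simp
    qed (use Sup_Z in simp_all)
    with Sup_Z at_T show False by simp
  qed
  have "dphi s < 0"
    using s_range by (rule dphi_neg) (use phi_pos s_range in auto)
  with phi_pos s_range show ?thesis by simp
qed

lemma solution_pos_and_deriv_neg:
  fixes phi dphi q :: "real \<Rightarrow> real"
  assumes phi_deriv: "\<And>t. t \<ge> c \<Longrightarrow> (phi has_real_derivative dphi t) (at t within {c..})"
    and dphi_deriv: "\<And>t. t \<ge> c \<Longrightarrow> (dphi has_real_derivative q t * phi t) (at t within {c..})"
    and q_nonneg: "\<And>t. t \<ge> c \<Longrightarrow> q t \<ge> 0"
    and eventually_sign: "\<forall>\<^sub>F t in at_top. phi t > 0 \<and> dphi t < 0"
    and "c \<le> s"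
  shows "phi s > 0 \<and> dphi s < 0"
proof -
  obtain N where N: "\<And>t. t \<ge> N \<Longrightarrow> phi t > 0 \<and> dphi t < 0"
    using eventually_sign unfolding eventually_at_top_linorder by blast
  show ?thesis
    using N[of "max s N"] \<open>c \<le> s\<close>
    by (intro solution_pos_and_deriv_neg_before[where T = "max s N", OF phi_deriv dphi_deriv q_nonneg])
      auto
qed

lemma eventually_pos_neg_if_normalized_limits:
  fixes f g e :: "'a \<Rightarrow> real"
  assumes "((\<lambda>t. f t * e t) \<longlongrightarrow> a) F" "((\<lambda>t. g t * e t) \<longlongrightarrow> b) F"
    and "a > 0" "b < 0" "\<And>t. e t > 0"
  shows "\<forall>\<^sub>F t in F. f t > 0 \<and> g t < 0"
proof -
  have "\<forall>\<^sub>F t in F. f t * e t > 0" "\<forall>\<^sub>F t in F. g t * e t < 0"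
    using order_tendstoD(1)[OF assms(1) \<open>a > 0\<close>] order_tendstoD(2)[OF assms(2) \<open>b < 0\<close>] by auto
  then show ?thesis
    by eventually_elim (metis assms(5) less_asym zero_less_mult_iff mult_less_0_iff)
qed

lemma tendsto_imp_bounds_atLeast:
  fixes f :: "real \<Rightarrow> real"
  assumes cont: "continuous_on {a..} f"
    and pos: "\<And>t. t \<ge> a \<Longrightarrow> f t > 0"
    and lim: "(f \<longlongrightarrow> l) at_top" and "l > 0"
  shows "\<exists>L U. 0 < L \<and> (\<forall>t \<ge> a. L \<le> f t \<and> f t \<le> U)"
proof -
  have "\<forall>\<^sub>F t in at_top. l / 2 < f t" "\<forall>\<^sub>F t in at_top. f t < 2 * l"
    using order_tendstoD(1)[OF lim, of "l / 2"] order_tendstoD(2)[OF lim, of "2 * l"] \<open>l > 0\<close>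
    by simp_all
  then have "\<forall>\<^sub>F t in at_top. t \<ge> a \<and> l / 2 < f t \<and> f t < 2 * l"
    by (intro eventually_conj eventually_ge_at_top)
  then obtain T where T: "\<And>t. t \<ge> T \<Longrightarrow> t \<ge> a \<and> l / 2 < f t \<and> f t < 2 * l"
    unfolding eventually_at_top_linorder by blast
  have "a \<le> T"
    using T[of T] by simp
  have "continuous_on {a..T} f"
    using cont by (rule continuous_on_subset) auto
  then obtain x y where "x \<in> {a..T}" "y \<in> {a..T}"
    and x_min: "\<And>t. t \<in> {a..T} \<Longrightarrow> f x \<le> f t"
    and y_max: "\<And>t. t \<in> {a..T} \<Longrightarrow> f t \<le> f y"
    using continuous_attains_inf[OF compact_Icc] continuous_attains_sup[OF compact_Icc] \<open>a \<le> T\<close>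
    by (metis atLeastAtMost_iff empty_iff order.refl)
  have "0 < min (f x) (l / 2)"
    using pos \<open>x \<in> {a..T}\<close> \<open>l > 0\<close> by simp
  moreover have "min (f x) (l / 2) \<le> f t \<and> f t \<le> max (f y) (2 * l)" if "t \<ge> a" for t
    using x_min[of t] y_max[of t] T[of t] that by (cases "t \<le> T") auto
  ultimately show ?thesis
    by blast
qed

lemma exists_factor_below_and_above:
  fixes L U lam :: real
  assumes "0 < L" "0 < lam"
  shows "\<exists>\<delta>. 0 < \<delta> \<and> \<delta> < 1 \<and> lam * \<delta> \<le> L \<and> U \<le> lam / \<delta>"
proof -
  define \<delta> where "\<delta> = min (1 / 2) (min (L / lam) (lam / max U lam))"
  have "0 < \<delta>" "\<delta> < 1"
    using assms by (simp_all add: \<delta>_def)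
  moreover have "\<delta> \<le> L / lam"
    by (simp add: \<delta>_def)
  then have "lam * \<delta> \<le> L"
    using assms by (simp add: field_simps)
  moreover have "\<delta> \<le> lam / max U lam"
    by (simp add: \<delta>_def)
  then have "\<delta> * max U lam \<le> lam"
    using assms by (simp add: pos_le_divide_eq)
  then have "U * \<delta> \<le> lam"
    using \<open>0 < \<delta>\<close> by (smt (verit) max.cobounded1 mult.commute mult_right_mono)
  then have "U \<le> lam / \<delta>"
    using \<open>0 < \<delta>\<close> by (simp add: pos_le_divide_eq)
  ultimately show ?thesis
    by blast
qed

lemma tendsto_divide_common_factor:
  fixes g h e :: "'a \<Rightarrow> real"
  assumes "((\<lambda>t. g t * e t) \<longlongrightarrow> a) F" "((\<lambda>t. h t * e t) \<longlongrightarrow> b) F"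
    and "b \<noteq> 0" "\<And>t. e t \<noteq> 0"
  shows "((\<lambda>t. g t / h t) \<longlongrightarrow> a / b) F"
  using tendsto_divide[OF assms(1-3)] assms(4) by simp

theorem lemma3p2:
  fixes b :: "real \<Rightarrow> real" and lam :: real
    and phi dphi :: "real \<Rightarrow> real"
  assumes b_L1: "b absolutely_integrable_on {0..}"
    and lam_pos: "lam > 0"
    and phi_deriv: "\<And>t. t \<ge> 0 \<Longrightarrow> (phi has_real_derivative dphi t) (at t within {0..})"
    and dphi_deriv: "\<And>t. t \<ge> 0 \<Longrightarrow>
          (dphi has_real_derivative (lam\<^sup>2 * (mt_fun b t)\<^sup>2 * phi t)) (at t within {0..})"
    and asym: "\<exists>t0 \<ge> 0.
          ((\<lambda>t. phi t * exp (lam * integral {t0..t} (mt_fun b))) \<longlongrightarrow> 1) at_top \<and>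
          ((\<lambda>t. dphi t * exp (lam * integral {t0..t} (mt_fun b))) \<longlongrightarrow> - lam * k_const b) at_top"
  shows "\<exists>\<delta>2. 0 < \<delta>2 \<and> \<delta>2 < 1 \<and>
           (\<forall>t \<ge> 0. lam * \<delta>2 \<le> - dphi t / phi t \<and> - dphi t / phi t \<le> lam / \<delta>2)"
proof -
  obtain t0 where lim_phi: "((\<lambda>t. phi t * exp (lam * integral {t0..t} (mt_fun b))) \<longlongrightarrow> 1) at_top"
    and lim_dphi: "((\<lambda>t. dphi t * exp (lam * integral {t0..t} (mt_fun b))) \<longlongrightarrow> - lam * k_const b) at_top"
    using asym by blast
  have "lam * k_const b > 0"
    using lam_pos by (simp add: k_const_def)
  have sign: "phi t > 0 \<and> dphi t < 0" if "t \<ge> 0" for t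
    using eventually_pos_neg_if_normalized_limits[OF lim_phi lim_dphi] \<open>lam * k_const b > 0\<close> that
    by (intro solution_pos_and_deriv_neg[OF phi_deriv dphi_deriv]) auto
  have "((\<lambda>t. - (dphi t / phi t)) \<longlongrightarrow> - (- lam * k_const b / 1)) at_top"
    by (intro tendsto_minus tendsto_divide_common_factor[OF lim_dphi lim_phi]) simp_all
  then have lim_nu: "((\<lambda>t. - dphi t / phi t) \<longlongrightarrow> lam * k_const b) at_top"
    by simp
  have "continuous_on {0..} phi"
    by (rule DERIV_continuous_on) (use phi_deriv in auto)
  moreover have "continuous_on {0..} dphi"
    by (rule DERIV_continuous_on) (use dphi_deriv in auto)
  ultimately have nu_cont: "continuous_on {0..} (\<lambda>t. - dphi t / phi t)"
    using sign by (intro continuous_intros) force+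
  have nu_pos: "- dphi t / phi t > 0" if "t \<ge> 0" for t
    using sign[OF that] by (simp add: divide_neg_pos)
  obtain L U where "0 < L"
    and bounds: "\<And>t. t \<ge> 0 \<Longrightarrow> L \<le> - dphi t / phi t \<and> - dphi t / phi t \<le> U"
    using tendsto_imp_bounds_atLeast[OF nu_cont nu_pos lim_nu \<open>lam * k_const b > 0\<close>] by blast
  then obtain \<delta> where "0 < \<delta>" "\<delta> < 1" "lam * \<delta> \<le> L" "U \<le> lam / \<delta>"
    using exists_factor_below_and_above lam_pos by blast
  with bounds show ?thesis
    by (intro exI[of _ \<delta>]) fastforce
qed

end
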